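(* Let $n,k,d$ be positive integers with $k\le d<n$, let $\alpha>0$, and for each integer $M\ge 0$ set $n_M=n+M$, $k_M=k+M$, $d_M=d+M$, $\gamma_{MSR}=\frac{d_M\alpha}{d_M-k_M+1}$ and $\gamma_{MBR}=\alpha$. Let $s\in[0,1]$ be fixed. Then $$ \lim_{M\to\infty}\frac{C^{\text{exact}}_{n_M,k_M,d_M}\big(\alpha,\,s\gamma_{MSR}+(1-s)\gamma_{MBR}\big)}{C_{k_M,d_M}\big(\alpha,\,s\gamma_{MSR}+(1-s)\gamma_{MBR}\big)}=1. $$
   Context: A distributed storage system (regenerating code) with parameters $(n,k,d)$, node size $\alpha$ and total repair bandwidth $\gamma$ stores a file on $n$ nodes, each node storing an amount $\alpha$ of information, such that the file can be reconstructed from the contents of any $k$ nodes, and any lost node can be repaired by contacting any $d$ of the remaining nodes, each of which transmits an amount $\beta=\gamma/d$ to the new node. The code has exact repair if the repaired node stores exactly the same content as the lost node, and functional repair if the repaired node need only preserve the reconstruction and repair properties. $C^{\text{exact}}_{n,k,d}(\alpha,\gamma)$ denotes the capacity (maximum storable file size) of exact-repair codes with these parameters. Amounts of information are treated as arbitrarily divisible, so capacities are positively homogeneous. $C_{k,d}(\alpha,\gamma)$ denotes the capacity of functional-repair codes, which equals $\sum_{j=0}^{k-1}\min\{\alpha,\frac{d-j}{d}\gamma\}$. *)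

theory Defs
  imports Complex_Main "HOL-Library.FuncSet"
begin

text \<open>An (n,k,d) exact-repair code storing the file set F (finite, nonempty; file size
  log2 |F| bits) on nodes 0..n-1. enc i f is the content of node i for file f.
  Each node stores at most a bits (at most 2 powr a distinct contents); reconstruction
  from any k nodes; exact repair of any node i from any d other nodes H, each helper j
  sending at most b bits (message h j computed from its own content, may depend on i and H).\<close>
definition exact_repair_code ::
  "nat \<Rightarrow> nat \<Rightarrow> nat \<Rightarrow> real \<Rightarrow> real \<Rightarrow> nat set \<Rightarrow> (nat \<Rightarrow> nat \<Rightarrow> nat) \<Rightarrow> bool" where
  "exact_repair_code n k d a b F enc \<longleftrightarrow>
     finite F \<and> F \<noteq> {} \<and>
     (\<forall>i<n. real (card (enc i ` F)) \<le> 2 powr a) \<and>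
     (\<forall>K. K \<subseteq> {..<n} \<and> card K = k \<longrightarrow> inj_on (\<lambda>f. restrict (\<lambda>i. enc i f) K) F) \<and>
     (\<forall>i<n. \<forall>H. H \<subseteq> {..<n} - {i} \<and> card H = d \<longrightarrow>
        (\<exists>(h :: nat \<Rightarrow> nat \<Rightarrow> nat) (g :: (nat \<Rightarrow> nat) \<Rightarrow> nat).
            (\<forall>j\<in>H. real (card (h j ` enc j ` F)) \<le> 2 powr b) \<and>
            (\<forall>f\<in>F. g (restrict (\<lambda>j. h j (enc j f)) H) = enc i f)))"

text \<open>Information is arbitrarily divisible: a code with scale
  t > 0 stores t*alpha per node, uses t*gamma/d per helper, and achieves normalized
  file size log2|F| / t; the capacity is the supremum of these.\<close>
definition C_exact :: "nat \<Rightarrow> nat \<Rightarrow> nat \<Rightarrow> real \<Rightarrow> real \<Rightarrow> real" where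
  "C_exact n k d \<alpha> \<gamma> = Sup {log 2 (real (card F)) / t | t F enc.
      t > 0 \<and> exact_repair_code n k d (t * \<alpha>) (t * \<gamma> / real d) F enc}"

definition C_func :: "nat \<Rightarrow> nat \<Rightarrow> real \<Rightarrow> real \<Rightarrow> real" where
  "C_func k d \<alpha> \<gamma> = (\<Sum>j<k. min \<alpha> ((real d - real j) / real d * \<gamma>))"

end

theory Submission
  imports Defs "HOL-Library.Countable_Set" "HOL-Computational_Algebra.Polynomial"
    "HOL-Real_Asymp.Real_Asymp"
begin

(* The upper bound C_exact <= C_func is the cut-set argument. Recover the nodes 0, ..., K - 1 one
   after another: node j is either read directly, or repaired from the already recovered nodes
   0, ..., j - 1 together with the D - j fresh nodes j + 1, ..., D, whose messages take at most
   2^((D - j) beta) values. So the file is determined by data with at most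
   prod_j min (2^alpha, 2^((D - j) beta)) values.

   For the lower bound at the MBR point gamma = alpha, the product-matrix code of Rashmi, Shah and
   Kumar attains C_func. For gamma > alpha we use the canonical layered code with layers of size w:
   it stores (w - (N - K)) N alpha / w at per-helper bandwidth alpha (w - 1) / (N - 1). Taking w - 1
   as large as the bandwidth gamma / D allows gives C_exact / C_func >= 1 - (N - K) / w, and along
   the sequence N - K and D - K stay fixed while w grows linearly in N.

   The codes are built over the naturals by evaluating polynomials with coefficients below Q at
   distinct integers. Their alphabets have size polynomial in Q, so the normalisation in C_exact
   loses nothing as Q tends to infinity. *)

section \<open>Repair codes over arbitrary alphabets\<close>

(* A and B bound the numbers of possible node contents and helper messages, and the decoders of
   exact_repair_code are replaced by the condition that the data received determine the result. *)
locale repair_code =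
  fixes N K D :: nat and A B :: real and F :: "'f set"
    and \<phi> :: "nat \<Rightarrow> 'f \<Rightarrow> 'v" and \<mu> :: "nat \<Rightarrow> nat set \<Rightarrow> nat \<Rightarrow> 'v \<Rightarrow> 'm"
  assumes finite_files: "finite F"
    and files_nonempty: "F \<noteq> {}"
    and node_card: "i < N \<Longrightarrow> real (card (\<phi> i ` F)) \<le> A"
    and reconstruct: "R \<subseteq> {..<N} \<Longrightarrow> card R = K \<Longrightarrow> f1 \<in> F \<Longrightarrow> f2 \<in> F \<Longrightarrow>
           (\<And>i. i \<in> R \<Longrightarrow> \<phi> i f1 = \<phi> i f2) \<Longrightarrow> f1 = f2"
    and message_card: "i < N \<Longrightarrow> H \<subseteq> {..<N} - {i} \<Longrightarrow> card H = D \<Longrightarrow> j \<in> H \<Longrightarrow>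
           real (card (\<mu> i H j ` \<phi> j ` F)) \<le> B"
    and repair: "i < N \<Longrightarrow> H \<subseteq> {..<N} - {i} \<Longrightarrow> card H = D \<Longrightarrow> f1 \<in> F \<Longrightarrow> f2 \<in> F \<Longrightarrow>
           (\<And>j. j \<in> H \<Longrightarrow> \<mu> i H j (\<phi> j f1) = \<mu> i H j (\<phi> j f2)) \<Longrightarrow> \<phi> i f1 = \<phi> i f2"

lemma repair_code_mono:
  assumes "repair_code N K D A B F \<phi> \<mu>" "A \<le> A'" "B \<le> B'"
  shows "repair_code N K D A' B' F \<phi> \<mu>"
proof -
  interpret repair_code N K D A B F \<phi> \<mu> by fact
  show ?thesis
  proof (rule repair_code.intro)
    show "real (card (\<phi> i ` F)) \<le> A'" if "i < N" for i
      using node_card[OF that] assms(2) by linarith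
    show "real (card (\<mu> i H j ` \<phi> j ` F)) \<le> B'"
      if "i < N" "H \<subseteq> {..<N} - {i}" "card H = D" "j \<in> H" for i H j
      using message_card[OF that] assms(3) by linarith
  qed (fact finite_files files_nonempty reconstruct repair)+
qed

lemma
  assumes "exact_repair_code N K D a b F enc"
  shows exact_repair_code_finite: "finite F"
    and exact_repair_code_nonempty: "F \<noteq> {}"
    and exact_repair_code_node_card: "i < N \<Longrightarrow> real (card (enc i ` F)) \<le> 2 powr a"
    and exact_repair_code_reconstruct: "R \<subseteq> {..<N} \<Longrightarrow> card R = K \<Longrightarrow>
          inj_on (\<lambda>f. restrict (\<lambda>i. enc i f) R) F"
    and exact_repair_code_repair: "i < N \<Longrightarrow> H \<subseteq> {..<N} - {i} \<Longrightarrow> card H = D \<Longrightarrow>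
        \<exists>(h :: nat \<Rightarrow> nat \<Rightarrow> nat) (g :: (nat \<Rightarrow> nat) \<Rightarrow> nat).
            (\<forall>j\<in>H. real (card (h j ` enc j ` F)) \<le> 2 powr b) \<and>
            (\<forall>f\<in>F. g (restrict (\<lambda>j. h j (enc j f)) H) = enc i f)"
  using assms unfolding exact_repair_code_def by simp_all

lemma exact_repair_code_imp_repair_code:
  assumes code: "exact_repair_code N K D a b F enc"
  obtains \<mu> :: "nat \<Rightarrow> nat set \<Rightarrow> nat \<Rightarrow> nat \<Rightarrow> nat"
  where "repair_code N K D (2 powr a) (2 powr b) F enc \<mu>"
proof -
  have "\<forall>i H. \<exists>h (g :: (nat \<Rightarrow> nat) \<Rightarrow> nat). i < N \<and> H \<subseteq> {..<N} - {i} \<and> card H = D \<longrightarrow>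
          (\<forall>j\<in>H. real (card (h j ` enc j ` F)) \<le> 2 powr b) \<and>
          (\<forall>f\<in>F. g (restrict (\<lambda>j. h j (enc j f)) H) = enc i f)"
    using exact_repair_code_repair[OF code] by blast
  then have "\<exists>h (g :: nat \<Rightarrow> nat set \<Rightarrow> (nat \<Rightarrow> nat) \<Rightarrow> nat). \<forall>i H.
          i < N \<and> H \<subseteq> {..<N} - {i} \<and> card H = D \<longrightarrow>
          (\<forall>j\<in>H. real (card (h i H j ` enc j ` F)) \<le> 2 powr b) \<and>
          (\<forall>f\<in>F. g i H (restrict (\<lambda>j. h i H j (enc j f)) H) = enc i f)"
    by (simp only: choice_iff)
  then obtain h :: "nat \<Rightarrow> nat set \<Rightarrow> nat \<Rightarrow> nat \<Rightarrow> nat" and g where hg: "\<forall>i H.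
          i < N \<and> H \<subseteq> {..<N} - {i} \<and> card H = D \<longrightarrow>
          (\<forall>j\<in>H. real (card (h i H j ` enc j ` F)) \<le> 2 powr b) \<and>
          (\<forall>f\<in>F. g i H (restrict (\<lambda>j. h i H j (enc j f)) H) = enc i f)"
    by blast
  have "repair_code N K D (2 powr a) (2 powr b) F enc h"
  proof
    fix R f1 f2
    assume R: "R \<subseteq> {..<N}" "card R = K" and f: "f1 \<in> F" "f2 \<in> F"
      and agree: "\<And>i. i \<in> R \<Longrightarrow> enc i f1 = enc i f2"
    have "restrict (\<lambda>i. enc i f1) R = restrict (\<lambda>i. enc i f2) R"
      using agree by (rule restrict_ext)
    with exact_repair_code_reconstruct[OF code R] show "f1 = f2"
      using f by (rule inj_onD)
  next
    fix i H j
    assume "i < N" "H \<subseteq> {..<N} - {i}" "card H = D" "j \<in> H"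
    then show "real (card (h i H j ` enc j ` F)) \<le> 2 powr b" using hg by simp
  next
    fix i H f1 f2
    assume H: "i < N" "H \<subseteq> {..<N} - {i}" "card H = D" and f: "f1 \<in> F" "f2 \<in> F"
      and agree: "\<And>j. j \<in> H \<Longrightarrow> h i H j (enc j f1) = h i H j (enc j f2)"
    have "restrict (\<lambda>j. h i H j (enc j f1)) H = restrict (\<lambda>j. h i H j (enc j f2)) H"
      using agree by (rule restrict_ext)
    moreover have "\<forall>f\<in>F. g i H (restrict (\<lambda>j. h i H j (enc j f)) H) = enc i f"
      using hg H by blast
    ultimately show "enc i f1 = enc i f2" using f by metis
  qed (use code in \<open>simp_all add: exact_repair_code_finite exact_repair_code_nonempty
        exact_repair_code_node_card\<close>)
  then show thesis by (rule that)
qed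

lemma repair_code_to_nat:
  assumes "repair_code N K D A B F \<phi> \<mu>"
  obtains F' :: "nat set" and \<phi>' :: "nat \<Rightarrow> nat \<Rightarrow> nat" and \<mu>' :: "nat \<Rightarrow> nat set \<Rightarrow> nat \<Rightarrow> nat \<Rightarrow> nat"
  where "repair_code N K D A B F' \<phi>' \<mu>'" "card F' = card F"
proof -
  interpret repair_code N K D A B F \<phi> \<mu> by fact
  have cF: "countable F" and c\<phi>: "countable (\<phi> i ` F)" and c\<mu>: "countable (\<mu> i H j ` \<phi> j ` F)"
    for i H j using finite_files by (simp_all add: countable_finite)
  define \<iota> where "\<iota> = to_nat_on F"
  define \<phi>' where "\<phi>' i x = to_nat_on (\<phi> i ` F) (\<phi> i (from_nat_into F x))" for i x
  define \<mu>' where "\<mu>' i H j y = to_nat_on (\<mu> i H j ` \<phi> j ` F) (\<mu> i H j (from_nat_into (\<phi> j ` F) y))"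
    for i H j y
  have \<phi>'_\<iota>: "\<phi>' i (\<iota> f) = to_nat_on (\<phi> i ` F) (\<phi> i f)" if "f \<in> F" for i f
    using that cF by (simp add: \<phi>'_def \<iota>_def)
  have \<mu>'_\<iota>: "\<mu>' i H j (\<phi>' j (\<iota> f)) = to_nat_on (\<mu> i H j ` \<phi> j ` F) (\<mu> i H j (\<phi> j f))"
    if "f \<in> F" for i H j f
    using that c\<phi> by (simp add: \<phi>'_\<iota> \<mu>'_def)
  have \<phi>'_eq: "\<phi>' i (\<iota> f1) = \<phi>' i (\<iota> f2) \<longleftrightarrow> \<phi> i f1 = \<phi> i f2" if "f1 \<in> F" "f2 \<in> F" for i f1 f2
    using that c\<phi> by (simp add: \<phi>'_\<iota> to_nat_on_inj)
  have \<mu>'_eq: "\<mu>' i H j (\<phi>' j (\<iota> f1)) = \<mu>' i H j (\<phi>' j (\<iota> f2))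
      \<longleftrightarrow> \<mu> i H j (\<phi> j f1) = \<mu> i H j (\<phi> j f2)"
    if "f1 \<in> F" "f2 \<in> F" for i H j f1 f2
    using that c\<mu> by (simp add: \<mu>'_\<iota> to_nat_on_inj)
  have "repair_code N K D A B (\<iota> ` F) \<phi>' \<mu>'"
  proof
    show "finite (\<iota> ` F)" "\<iota> ` F \<noteq> {}" using finite_files files_nonempty by simp_all
  next
    fix i assume "i < N"
    have "\<phi>' i ` \<iota> ` F = to_nat_on (\<phi> i ` F) ` \<phi> i ` F"
      unfolding image_image by (rule image_cong) (simp_all add: \<phi>'_\<iota>)
    then show "real (card (\<phi>' i ` \<iota> ` F)) \<le> A"
      using node_card[OF \<open>i < N\<close>] by (simp add: card_image inj_on_to_nat_on c\<phi>)
  next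
    fix i H j assume H: "i < N" "H \<subseteq> {..<N} - {i}" "card H = D" "j \<in> H"
    define X where "X = (\<lambda>f. \<mu> i H j (\<phi> j f)) ` F"
    have X: "\<mu> i H j ` \<phi> j ` F = X" unfolding X_def by (simp add: image_image)
    have "\<mu>' i H j ` \<phi>' j ` \<iota> ` F = to_nat_on X ` X"
      unfolding X_def image_image by (rule image_cong) (simp_all add: \<mu>'_\<iota> image_image)
    then show "real (card (\<mu>' i H j ` \<phi>' j ` \<iota> ` F)) \<le> B"
      using message_card[OF H] c\<mu>[of i H j] unfolding X by (simp add: card_image inj_on_to_nat_on)
  next
    fix R x1 x2 assume R: "R \<subseteq> {..<N}" "card R = K" and x: "x1 \<in> \<iota> ` F" "x2 \<in> \<iota> ` F"
      and agree: "\<And>i. i \<in> R \<Longrightarrow> \<phi>' i x1 = \<phi>' i x2"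
    from x obtain f1 f2 where f: "f1 \<in> F" "f2 \<in> F" "x1 = \<iota> f1" "x2 = \<iota> f2" by blast
    have "f1 = f2" using reconstruct[OF R f(1,2)] agree \<phi>'_eq f by blast
    then show "x1 = x2" using f by simp
  next
    fix i H x1 x2 assume H: "i < N" "H \<subseteq> {..<N} - {i}" "card H = D" and x: "x1 \<in> \<iota> ` F" "x2 \<in> \<iota> ` F"
      and agree: "\<And>j. j \<in> H \<Longrightarrow> \<mu>' i H j (\<phi>' j x1) = \<mu>' i H j (\<phi>' j x2)"
    from x obtain f1 f2 where f: "f1 \<in> F" "f2 \<in> F" "x1 = \<iota> f1" "x2 = \<iota> f2" by blast
    have "\<phi> i f1 = \<phi> i f2" using repair[OF H f(1,2)] agree \<mu>'_eq f by blast
    then show "\<phi>' i x1 = \<phi>' i x2" using \<phi>'_eq f by blast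
  qed
  moreover have "card (\<iota> ` F) = card F"
    unfolding \<iota>_def using cF by (intro card_image inj_on_to_nat_on)
  ultimately show thesis by (rule that)
qed

lemma nat_repair_code_imp_exact_repair_code:
  fixes F :: "nat set" and \<phi> :: "nat \<Rightarrow> nat \<Rightarrow> nat" and \<mu> :: "nat \<Rightarrow> nat set \<Rightarrow> nat \<Rightarrow> nat \<Rightarrow> nat"
  assumes "repair_code N K D (2 powr a) (2 powr b) F \<phi> \<mu>"
  shows "exact_repair_code N K D a b F \<phi>"
proof -
  interpret repair_code N K D "2 powr a" "2 powr b" F \<phi> \<mu> by fact
  show ?thesis unfolding exact_repair_code_def
  proof (intro conjI allI impI inj_onI)
    fix R f1 f2 assume R: "R \<subseteq> {..<N} \<and> card R = K" and f: "f1 \<in> F" "f2 \<in> F"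
      and "restrict (\<lambda>i. \<phi> i f1) R = restrict (\<lambda>i. \<phi> i f2) R"
    then have "\<phi> i f1 = \<phi> i f2" if "i \<in> R" for i using that by (metis restrict_apply')
    then show "f1 = f2" using reconstruct R f by blast
  next
    fix i H assume H: "i < N" "H \<subseteq> {..<N} - {i} \<and> card H = D"
    define msg where "msg f = restrict (\<lambda>j. \<mu> i H j (\<phi> j f)) H" for f
    have "\<phi> i (SOME f'. f' \<in> F \<and> msg f' = msg f) = \<phi> i f" if "f \<in> F" for f
    proof (rule someI2[of _ f])
      fix f' assume f': "f' \<in> F \<and> msg f' = msg f"
      have "\<mu> i H j (\<phi> j f') = \<mu> i H j (\<phi> j f)" if "j \<in> H" for j
        using fun_cong[OF conjunct2[OF f'], of j] that by (simp add: msg_def)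
      then show "\<phi> i f' = \<phi> i f" using repair H f' \<open>f \<in> F\<close> by blast
    qed (use that in simp)
    moreover have "\<forall>j\<in>H. real (card (\<mu> i H j ` \<phi> j ` F)) \<le> 2 powr b"
      using message_card H by blast
    ultimately show "\<exists>(h :: nat \<Rightarrow> nat \<Rightarrow> nat) (g :: (nat \<Rightarrow> nat) \<Rightarrow> nat).
            (\<forall>j\<in>H. real (card (h j ` \<phi> j ` F)) \<le> 2 powr b) \<and>
            (\<forall>f\<in>F. g (restrict (\<lambda>j. h j (\<phi> j f)) H) = \<phi> i f)"
      by (intro exI[of _ "\<mu> i H"] exI[of _ "\<lambda>m. \<phi> i (SOME f'. f' \<in> F \<and> msg f' = m)"])
        (simp_all add: msg_def)
  qed (use finite_files files_nonempty node_card in auto)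
qed

section \<open>The cut-set bound\<close>

lemma card_image_restrict_le_prod:
  assumes "finite F" "finite I"
  shows "card ((\<lambda>f. restrict (\<lambda>i. g i f) I) ` F) \<le> (\<Prod>i\<in>I. card (g i ` F))"
proof -
  have "(\<lambda>f. restrict (\<lambda>i. g i f) I) ` F \<subseteq> PiE I (\<lambda>i. g i ` F)" by auto
  then have "card ((\<lambda>f. restrict (\<lambda>i. g i f) I) ` F) \<le> card (PiE I (\<lambda>i. g i ` F))"
    by (rule card_mono[rotated]) (simp add: assms finite_PiE)
  then show ?thesis by (simp add: card_PiE assms(2))
qed

definition cut_helpers :: "nat \<Rightarrow> nat \<Rightarrow> nat set" where
  "cut_helpers D j = {..<j} \<union> {j<..D}"

lemma cut_helpers_subset: "j \<le> D \<Longrightarrow> D < N \<Longrightarrow> cut_helpers D j \<subseteq> {..<N} - {j}"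
  unfolding cut_helpers_def by auto

lemma card_cut_helpers: "j \<le> D \<Longrightarrow> card (cut_helpers D j) = D"
  unfolding cut_helpers_def by (subst card_Un_disjoint) auto

context repair_code
begin

lemma card_messages_le:
  assumes "i < N" "H \<subseteq> {..<N} - {i}" "card H = D" "E \<subseteq> H"
  shows "real (card ((\<lambda>f. restrict (\<lambda>j. \<mu> i H j (\<phi> j f)) E) ` F)) \<le> B ^ card E"
proof -
  have fin: "finite E" by (rule finite_subset[OF subset_trans[OF assms(4,2)]]) simp
  have "real (card ((\<lambda>f. restrict (\<lambda>j. \<mu> i H j (\<phi> j f)) E) ` F))
      \<le> (\<Prod>j\<in>E. real (card ((\<lambda>f. \<mu> i H j (\<phi> j f)) ` F)))"
    unfolding of_nat_prod[symmetric] of_nat_le_iff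
      by (rule card_image_restrict_le_prod[OF finite_files fin])
  also have "\<dots> \<le> (\<Prod>j\<in>E. B)"
  proof (rule prod_mono)
    fix j assume "j \<in> E"
    with assms(4) have "real (card (\<mu> i H j ` \<phi> j ` F)) \<le> B"
      by (intro message_card[OF assms(1-3)]) auto
    then show "0 \<le> real (card ((\<lambda>f. \<mu> i H j (\<phi> j f)) ` F))
          \<and> real (card ((\<lambda>f. \<mu> i H j (\<phi> j f)) ` F)) \<le> B"
      by (simp add: image_image)
  qed
  finally show ?thesis using fin by simp
qed

lemma eq_if_cut_agree:
  assumes "K \<le> D" "D < N" and f: "f1 \<in> F" "f2 \<in> F"
    and agree: "\<And>j. j < K \<Longrightarrow> \<phi> j f1 = \<phi> j f2 \<or>
      (\<forall>l\<in>{j<..D}. \<mu> j (cut_helpers D j) l (\<phi> l f1) = \<mu> j (cut_helpers D j) l (\<phi> l f2))"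
  shows "f1 = f2"
proof -
  have "\<phi> j f1 = \<phi> j f2" if "j < K" for j
    using that
  proof (induction j rule: less_induct)
    case (less j)
    show ?case
    proof (cases "\<phi> j f1 = \<phi> j f2")
      case False
      then have later: "\<forall>l\<in>{j<..D}. \<mu> j (cut_helpers D j) l (\<phi> l f1)
            = \<mu> j (cut_helpers D j) l (\<phi> l f2)"
        using agree less.prems by blast
      show ?thesis
      proof (rule repair[OF _ cut_helpers_subset card_cut_helpers f])
        fix l assume "l \<in> cut_helpers D j"
        then show "\<mu> j (cut_helpers D j) l (\<phi> l f1) = \<mu> j (cut_helpers D j) l (\<phi> l f2)"
          using later less by (auto simp: cut_helpers_def)
      qed (use assms less.prems in auto)
    qed
  qed
  then show ?thesis using reconstruct[of "{..<K}"] assms by auto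
qed

lemma card_files_le:
  assumes "K \<le> D" "D < N"
  shows "real (card F) \<le> (\<Prod>j<K. min A (B ^ (D - j)))"
proof -
  define msgs where "msgs j f = restrict (\<lambda>l. \<mu> j (cut_helpers D j) l (\<phi> l f)) {j<..D}" for j f
  \<comment> \<open>Node j contributes its content or the messages from nodes j + 1, ..., D, whichever has
    fewer possible values.\<close>
  define cut where "cut j f = (if B ^ (D - j) \<le> A then Inl (msgs j f) else Inr (\<phi> j f))" for j f
  have "inj_on (\<lambda>f. restrict (\<lambda>j. cut j f) {..<K}) F"
  proof (rule inj_onI)
    fix f1 f2 assume f: "f1 \<in> F" "f2 \<in> F"
      and eq: "restrict (\<lambda>j. cut j f1) {..<K} = restrict (\<lambda>j. cut j f2) {..<K}"
    show "f1 = f2"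
    proof (rule eq_if_cut_agree[OF assms f])
      fix j assume "j < K"
      then have "cut j f1 = cut j f2" using fun_cong[OF eq, of j] by simp
      then show "\<phi> j f1 = \<phi> j f2 \<or>
          (\<forall>l\<in>{j<..D}. \<mu> j (cut_helpers D j) l (\<phi> l f1) = \<mu> j (cut_helpers D j) l (\<phi> l f2))"
        unfolding cut_def msgs_def by (auto split: if_splits dest: fun_cong)
    qed
  qed
  then have "card F = card ((\<lambda>f. restrict (\<lambda>j. cut j f) {..<K}) ` F)" by (simp add: card_image)
  also have "\<dots> \<le> (\<Prod>j<K. card (cut j ` F))"
    by (rule card_image_restrict_le_prod) (simp_all add: finite_files)
  finally have "real (card F) \<le> (\<Prod>j<K. real (card (cut j ` F)))"
    unfolding of_nat_prod[symmetric] of_nat_le_iff .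
  also have "\<dots> \<le> (\<Prod>j<K. min A (B ^ (D - j)))"
  proof (rule prod_mono)
    fix j assume "j \<in> {..<K}"
    then have j: "j < N" "j \<le> D" using assms by auto
    have "real (card (cut j ` F)) \<le> min A (B ^ (D - j))"
    proof (cases "B ^ (D - j) \<le> A")
      case True
      then have "cut j ` F = Inl ` msgs j ` F" by (auto simp: cut_def)
      then have "real (card (cut j ` F)) = real (card (msgs j ` F))" by (simp add: card_image)
      also have "\<dots> \<le> B ^ card {j<..D}" unfolding msgs_def
        using j assms by (intro card_messages_le cut_helpers_subset card_cut_helpers)
          (auto simp: cut_helpers_def)
      finally show ?thesis using True by simp
    next
      case False
      then have "cut j ` F = Inr ` \<phi> j ` F" by (auto simp: cut_def)
      then show ?thesis using False node_card[OF j(1)] by (simp add: card_image)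
    qed
    then show "0 \<le> real (card (cut j ` F)) \<and> real (card (cut j ` F)) \<le> min A (B ^ (D - j))"
      by simp
  qed
  finally show ?thesis .
qed

end

lemma exact_repair_code_log_card_le:
  assumes code: "exact_repair_code N K D a b F enc" and "K \<le> D" "D < N"
  shows "log 2 (card F) \<le> (\<Sum>j<K. min a ((real D - real j) * b))"
proof -
  obtain \<mu> :: "nat \<Rightarrow> nat set \<Rightarrow> nat \<Rightarrow> nat \<Rightarrow> nat"
    where "repair_code N K D (2 powr a) (2 powr b) F enc \<mu>"
    using exact_repair_code_imp_repair_code[OF code] .
  then have "real (card F) \<le> (\<Prod>j<K. min (2 powr a) ((2 powr b) ^ (D - j)))"
    using assms(2,3) by (rule repair_code.card_files_le)
  also have "\<dots> = (\<Prod>j<K. 2 powr min a ((real D - real j) * b))"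
  proof (rule prod.cong[OF refl])
    fix j assume "j \<in> {..<K}"
    then have "(2 powr b) ^ (D - j) = 2 powr ((real D - real j) * b)"
      using assms by (simp add: powr_realpow[symmetric] powr_powr of_nat_diff mult.commute)
    then show "min (2 powr a) ((2 powr b) ^ (D - j)) = 2 powr min a ((real D - real j) * b)"
      by (simp add: min_def)
  qed
  also have "\<dots> = 2 powr (\<Sum>j<K. min a ((real D - real j) * b))" by (simp add: powr_sum)
  finally show ?thesis
    using exact_repair_code_finite[OF code] exact_repair_code_nonempty[OF code]
    by (simp add: log_le_iff card_gt_0_iff)
qed

lemma exact_repair_code_singleton:
  assumes "0 \<le> a" "0 \<le> b"
  shows "exact_repair_code N K D a b {0} (\<lambda>i f. 0)"
  unfolding exact_repair_code_def
proof (intro conjI allI impI)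
  show "real (card ((\<lambda>f. 0::nat) ` {0::nat})) \<le> 2 powr a" using assms(1)
    by (simp add: ge_one_powr_ge_zero)
  show "\<exists>(h :: nat \<Rightarrow> nat \<Rightarrow> nat) (g :: (nat \<Rightarrow> nat) \<Rightarrow> nat).
          (\<forall>j\<in>H. real (card (h j ` (\<lambda>f. 0) ` {0::nat})) \<le> 2 powr b) \<and>
          (\<forall>f\<in>{0}. g (restrict (\<lambda>j. h j 0) H) = 0)" for H
    using assms(2) by (intro exI[of _ "\<lambda>j x. 0"] exI[of _ "\<lambda>m. 0"]) (simp add: ge_one_powr_ge_zero)
qed simp_all

section \<open>Capacity bounds from codes\<close>

definition achievable_rates :: "nat \<Rightarrow> nat \<Rightarrow> nat \<Rightarrow> real \<Rightarrow> real \<Rightarrow> real set" where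
  "achievable_rates N K D \<alpha> \<gamma> = {log 2 (real (card F)) / t | t F enc.
      t > 0 \<and> exact_repair_code N K D (t * \<alpha>) (t * \<gamma> / real D) F enc}"

lemma C_exact_eq_Sup_achievable_rates: "C_exact N K D \<alpha> \<gamma> = Sup (achievable_rates N K D \<alpha> \<gamma>)"
  unfolding C_exact_def achievable_rates_def ..

lemma achievable_ratesI:
  "0 < t \<Longrightarrow> exact_repair_code N K D (t * \<alpha>) (t * \<gamma> / real D) F enc \<Longrightarrow>
    log 2 (card F) / t \<in> achievable_rates N K D \<alpha> \<gamma>"
  unfolding achievable_rates_def by blast

lemma achievable_ratesE:
  assumes "x \<in> achievable_rates N K D \<alpha> \<gamma>"
  obtains t F enc where "0 < t" "exact_repair_code N K D (t * \<alpha>) (t * \<gamma> / real D) F enc"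
    "x = log 2 (card F) / t"
  using assms unfolding achievable_rates_def by blast

lemma zero_in_achievable_rates: "0 \<le> \<alpha> \<Longrightarrow> 0 \<le> \<gamma> \<Longrightarrow> 0 \<in> achievable_rates N K D \<alpha> \<gamma>"
  using achievable_ratesI[OF zero_less_one exact_repair_code_singleton] by simp

lemma achievable_rate_le_C_func:
  assumes "K \<le> D" "D < N" "x \<in> achievable_rates N K D \<alpha> \<gamma>"
  shows "x \<le> C_func K D \<alpha> \<gamma>"
proof -
  obtain t F enc where t: "0 < t" and code: "exact_repair_code N K D (t * \<alpha>) (t * \<gamma> / real D) F enc"
    and x: "x = log 2 (card F) / t"
    using assms(3) by (rule achievable_ratesE)
  have "log 2 (card F) \<le> (\<Sum>j<K. min (t * \<alpha>) ((real D - real j) * (t * \<gamma> / real D)))"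
    using exact_repair_code_log_card_le[OF code assms(1,2)] .
  also have "\<dots> = (\<Sum>j<K. t * min \<alpha> ((real D - real j) / real D * \<gamma>))"
  proof (rule sum.cong[OF refl])
    fix j
    have "(real D - real j) * (t * \<gamma> / real D) = t * ((real D - real j) / real D * \<gamma>)" by simp
    then show "min (t * \<alpha>) ((real D - real j) * (t * \<gamma> / real D))
          = t * min \<alpha> ((real D - real j) / real D * \<gamma>)"
      using t by (simp add: min_mult_distrib_left mult_ac)
  qed
  also have "\<dots> = t * C_func K D \<alpha> \<gamma>" unfolding C_func_def by (simp add: sum_distrib_left)
  finally show ?thesis using t x by (simp add: divide_le_eq mult.commute)
qed

lemma achievable_rate_le_C_exact:
  assumes "K \<le> D" "D < N" "x \<in> achievable_rates N K D \<alpha> \<gamma>"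
  shows "x \<le> C_exact N K D \<alpha> \<gamma>"
  unfolding C_exact_eq_Sup_achievable_rates
  using assms(3) achievable_rate_le_C_func[OF assms(1,2)]
  by (rule cSup_upper[OF _ bdd_aboveI[of _ "C_func K D \<alpha> \<gamma>"]])

lemma C_exact_le_C_func:
  assumes "K \<le> D" "D < N" "0 \<le> \<alpha>" "0 \<le> \<gamma>"
  shows "C_exact N K D \<alpha> \<gamma> \<le> C_func K D \<alpha> \<gamma>"
  unfolding C_exact_eq_Sup_achievable_rates
  using zero_in_achievable_rates[OF assms(3,4), of N K D] achievable_rate_le_C_func[OF assms(1,2)]
  by (rule cSup_least[OF ex_in_conv[THEN iffD1, OF exI]])

lemma C_exact_nonneg:
  assumes "K \<le> D" "D < N" "0 \<le> \<alpha>" "0 \<le> \<gamma>"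
  shows "0 \<le> C_exact N K D \<alpha> \<gamma>"
  using achievable_rate_le_C_exact[OF assms(1,2) zero_in_achievable_rates[OF assms(3,4)]] .

lemma C_exact_ge_scaled_code:
  assumes "K \<le> D" "D < N" "0 < D" "0 < m" "1 < y"
    and m: "real au \<le> m * \<alpha>" "real bu * real D \<le> m * \<gamma>"
    and code: "repair_code N K D (y ^ au) (y ^ bu) F \<phi> \<mu>"
  shows "log 2 (card F) / (m * log 2 y) \<le> C_exact N K D \<alpha> \<gamma>"
proof -
  define t where "t = m * log 2 y"
  have "0 < t" using assms(4,5) by (simp add: t_def)
  have pow: "y ^ e = 2 powr (real e * log 2 y)" for e :: nat
  proof -
    have "y ^ e = (2 powr log 2 y) powr real e" using \<open>1 < y\<close> by (simp add: powr_realpow)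
    then show ?thesis by (simp add: powr_powr mult.commute)
  qed
  have "y ^ au \<le> 2 powr (t * \<alpha>)"
    unfolding pow t_def using m(1) \<open>1 < y\<close> by (simp add: mult_right_mono mult_ac)
  moreover have "y ^ bu \<le> 2 powr (t * \<gamma> / real D)"
  proof -
    have "real bu * log 2 y \<le> t * \<gamma> / real D"
      using m(2) \<open>1 < y\<close> \<open>0 < D\<close> unfolding t_def by (simp add: field_simps mult_right_mono mult_ac)
    then show ?thesis unfolding pow by simp
  qed
  ultimately have "repair_code N K D (2 powr (t * \<alpha>)) (2 powr (t * \<gamma> / real D)) F \<phi> \<mu>"
    using code by (rule repair_code_mono[rotated])
  then obtain F' :: "nat set" and \<phi>' :: "nat \<Rightarrow> nat \<Rightarrow> nat"
    and \<mu>' :: "nat \<Rightarrow> nat set \<Rightarrow> nat \<Rightarrow> nat \<Rightarrow> nat"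
    where code': "repair_code N K D (2 powr (t * \<alpha>)) (2 powr (t * \<gamma> / real D)) F' \<phi>' \<mu>'"
      and "card F' = card F"
    by (rule repair_code_to_nat)
  have "log 2 (card F') / t \<in> achievable_rates N K D \<alpha> \<gamma>"
    using \<open>0 < t\<close> nat_repair_code_imp_exact_repair_code[OF code'] by (rule achievable_ratesI)
  with \<open>card F' = card F\<close> show ?thesis
    using achievable_rate_le_C_exact[OF assms(1,2)] by (simp add: t_def)
qed

lemma C_exact_ge_code_family:
  fixes c \<alpha> \<gamma> :: real and au bu L :: nat and Fs :: "nat \<Rightarrow> 'f set"
    and \<phi>s :: "nat \<Rightarrow> nat \<Rightarrow> 'f \<Rightarrow> 'v" and \<mu>s :: "nat \<Rightarrow> nat \<Rightarrow> nat set \<Rightarrow> nat \<Rightarrow> 'v \<Rightarrow> 'm"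
  assumes "K \<le> D" "D < N" "0 < D" "0 < \<alpha>" "0 < \<gamma>" "0 < au" "0 < bu" "1 \<le> c"
    and codes: "\<And>Q. 2 \<le> Q \<Longrightarrow>
      repair_code N K D ((c * real Q) ^ au) ((c * real Q) ^ bu) (Fs Q) (\<phi>s Q) (\<mu>s Q)"
    and card_Fs: "\<And>Q. 2 \<le> Q \<Longrightarrow> card (Fs Q) = Q ^ L"
  shows "real L * min (\<alpha> / real au) (\<gamma> / (real D * real bu)) \<le> C_exact N K D \<alpha> \<gamma>"
proof -
  define m where "m = max (real au / \<alpha>) (real bu * real D / \<gamma>)"
  have "0 < m" using assms by (simp add: m_def less_max_iff_disj)
  have "real au / \<alpha> \<le> m" "real bu * real D / \<gamma> \<le> m" by (simp_all add: m_def)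
  then have m: "real au \<le> m * \<alpha>" "real bu * real D \<le> m * \<gamma>"
    using assms by (simp_all add: pos_divide_le_eq)
  define rate where "rate Q = real L / m * (ln (real Q) / (ln c + ln (real Q)))" for Q :: nat
  have "rate Q \<le> C_exact N K D \<alpha> \<gamma>" if "2 \<le> Q" for Q
  proof -
    have "1 * 2 \<le> c * real Q" using that \<open>1 \<le> c\<close> by (intro mult_mono) auto
    then have "log 2 (card (Fs Q)) / (m * log 2 (c * real Q)) \<le> C_exact N K D \<alpha> \<gamma>"
      using C_exact_ge_scaled_code[OF assms(1-3) \<open>0 < m\<close> _ m codes[OF that]] by simp
    moreover have "0 < ln c + ln (real Q)" using \<open>1 \<le> c\<close> that by (intro add_nonneg_pos) simp_all
    ultimately show ?thesis
      using card_Fs[OF that] \<open>1 \<le> c\<close> that \<open>0 < m\<close>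
      by (simp add: rate_def log_def ln_realpow ln_mult field_simps)
  qed
  moreover have "((\<lambda>x. ln x / (ln c + ln x)) \<longlongrightarrow> 1) at_top" by real_asymp
  then have "(\<lambda>Q. ln (real Q) / (ln c + ln (real Q))) \<longlonglongrightarrow> 1"
    by (rule filterlim_compose[OF _ filterlim_real_sequentially])
  then have "rate \<longlonglongrightarrow> real L / m * 1" unfolding rate_def by (rule tendsto_mult_left)
  ultimately have "real L / m \<le> C_exact N K D \<alpha> \<gamma>"
    by (intro LIMSEQ_le_const2[of rate]) (auto intro!: exI[of _ 2])
  moreover have "min (\<alpha> / real au) (\<gamma> / (real D * real bu)) = 1 / m"
    using assms unfolding m_def by (auto simp: min_def max_def field_simps)
  ultimately show ?thesis by simp
qed

section \<open>Polynomial evaluation over the naturals\<close>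

definition poly_eval :: "nat \<Rightarrow> (nat \<Rightarrow> nat) \<Rightarrow> nat \<Rightarrow> nat" where
  "poly_eval L c x = (\<Sum>l<L. c l * x ^ l)"

lemma poly_eval_le:
  assumes "x < N" "\<And>l. l < L \<Longrightarrow> c l \<le> C"
  shows "poly_eval L c x \<le> L * C * N ^ L"
proof -
  have "c l * x ^ l \<le> C * N ^ L" if "l < L" for l
  proof (rule mult_mono)
    have "x ^ l \<le> N ^ l" using assms(1) by (intro power_mono) auto
    also have "\<dots> \<le> N ^ L" using assms(1) that by (intro power_increasing) auto
    finally show "x ^ l \<le> N ^ L" .
  qed (use assms(2) that in auto)
  then have "poly_eval L c x \<le> (\<Sum>l<L. C * N ^ L)" unfolding poly_eval_def by (intro sum_mono) auto
  then show ?thesis by (simp add: mult.assoc)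
qed

lemma poly_eval_coeffs_eq:
  assumes "finite X" "L \<le> card X" "\<And>x. x \<in> X \<Longrightarrow> poly_eval L c1 x = poly_eval L c2 x" "l < L"
  shows "c1 l = c2 l"
proof -
  define p :: "(nat \<Rightarrow> nat) \<Rightarrow> int poly" where "p c = (\<Sum>k<L. monom (int (c k)) k)" for c
  have poly_p: "poly (p c) (int x) = int (poly_eval L c x)" for c x
    by (simp add: p_def poly_sum poly_monom poly_eval_def)
  have coeff_p: "coeff (p c) k = (if k < L then int (c k) else 0)" for c k
    by (simp add: p_def coeff_sum coeff_monom)
  have "degree (p c) < card (int ` X)" for c
  proof -
    have "degree (p c) \<le> L - 1" by (rule degree_le) (auto simp: coeff_p)
    then show ?thesis using assms(2,4) by (simp add: card_image)
  qed
  then have "p c1 = p c2" by (intro poly_eqI_degree[of "int ` X"]) (auto simp: poly_p assms(3))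
  then show ?thesis using coeff_p[of c1 l] coeff_p[of c2 l] assms(4) by simp
qed

lemma card_le_power_if_subset_PiE:
  assumes "V \<subseteq> PiE A (\<lambda>_. {..R})" "finite A"
  shows "real (card V) \<le> (real R + 1) ^ card A"
proof -
  have "card V \<le> card (PiE A (\<lambda>_. {..R}))" using assms by (intro card_mono finite_PiE) auto
  also have "\<dots> = (R + 1) ^ card A" using assms(2) by (simp add: card_PiE)
  finally show ?thesis by (metis of_nat_1 of_nat_add of_nat_le_iff of_nat_power)
qed

section \<open>Product-matrix MBR codes\<close>

(* The message is a symmetric D x D matrix M vanishing on rows and columns >= K, with free entries
   at pm_positions. Node x stores psi_x^T M with psi_x = (1, x, ..., x^(D - 1)), and helper j sends
   psi_j^T M psi_i to node i. *)
definition pm_positions :: "nat \<Rightarrow> nat \<Rightarrow> (nat \<times> nat) set" where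
  "pm_positions K D = {(a, b). a < K \<and> a \<le> b \<and> b < D}"

definition pm_files :: "nat \<Rightarrow> nat \<Rightarrow> nat \<Rightarrow> (nat \<times> nat \<Rightarrow> nat) set" where
  "pm_files K D Q = PiE (pm_positions K D) (\<lambda>_. {..<Q})"

definition pm_matrix :: "nat \<Rightarrow> nat \<Rightarrow> (nat \<times> nat \<Rightarrow> nat) \<Rightarrow> nat \<Rightarrow> nat \<Rightarrow> nat" where
  "pm_matrix K D f a b = (if (min a b, max a b) \<in> pm_positions K D
      then f (min a b, max a b) else 0)"

definition pm_node :: "nat \<Rightarrow> (nat \<Rightarrow> nat \<Rightarrow> nat) \<Rightarrow> nat \<Rightarrow> nat \<Rightarrow> nat" where
  "pm_node D M x = (\<lambda>b\<in>{..<D}. poly_eval D (\<lambda>a. M a b) x)"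

lemma pm_matrix_sym: "pm_matrix K D f a b = pm_matrix K D f b a"
  unfolding pm_matrix_def by (simp add: min.commute max.commute)

lemma pm_matrix_zero: "K \<le> a \<Longrightarrow> K \<le> b \<Longrightarrow> pm_matrix K D f a b = 0"
  unfolding pm_matrix_def pm_positions_def by auto

lemma pm_matrix_le: "f \<in> pm_files K D Q \<Longrightarrow> pm_matrix K D f a b \<le> Q"
  unfolding pm_matrix_def pm_files_def by (auto simp: PiE_iff less_imp_le)

lemma pm_matrix_position: "(a, b) \<in> pm_positions K D \<Longrightarrow> pm_matrix K D f a b = f (a, b)"
  unfolding pm_matrix_def pm_positions_def by (auto simp: min_def max_def)

lemma card_pm_files: "K \<le> D \<Longrightarrow> card (pm_files K D Q) = Q ^ (\<Sum>a<K. D - a)"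
proof -
  assume "K \<le> D"
  have "pm_positions K D = Sigma {..<K} (\<lambda>a. {a..<D})" unfolding pm_positions_def by auto
  then have "card (pm_positions K D) = (\<Sum>a<K. D - a)" by (simp add: card_SigmaI)
  moreover have "finite (pm_positions K D)"
    by (rule finite_subset[of _ "{..<K} \<times> {..<D}"]) (auto simp: pm_positions_def)
  ultimately show ?thesis unfolding pm_files_def by (simp add: card_PiE)
qed

lemma poly_eval_pm_node_swap:
  assumes "\<And>a b. M a b = M b a"
  shows "poly_eval D (pm_node D M j) i = poly_eval D (pm_node D M i) j"
proof -
  have "poly_eval D (pm_node D M j) i = (\<Sum>b<D. \<Sum>a<D. M a b * j ^ a * i ^ b)"
    unfolding poly_eval_def pm_node_def by (simp add: sum_distrib_right)
  also have "\<dots> = (\<Sum>a<D. \<Sum>b<D. M b a * i ^ b * j ^ a)"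
    by (subst sum.swap) (simp add: assms mult_ac)
  also have "\<dots> = poly_eval D (pm_node D M i) j"
    unfolding poly_eval_def pm_node_def by (simp add: sum_distrib_right)
  finally show ?thesis .
qed

lemma sym_matrix_zero_block_eqI:
  fixes M1 M2 :: "nat \<Rightarrow> nat \<Rightarrow> nat"
  assumes sym: "\<And>a b. M1 a b = M1 b a" "\<And>a b. M2 a b = M2 b a"
    and zero: "\<And>a b. K \<le> a \<Longrightarrow> K \<le> b \<Longrightarrow> M1 a b = 0" "\<And>a b. K \<le> a \<Longrightarrow> K \<le> b \<Longrightarrow> M2 a b = 0"
    and X: "finite X" "K \<le> card X" and "K \<le> D"
    and rows: "\<And>x b. x \<in> X \<Longrightarrow> b < D \<Longrightarrow> poly_eval D (\<lambda>a. M1 a b) x = poly_eval D (\<lambda>a. M2 a b) x"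
    and "a < D" "b < D"
  shows "M1 a b = M2 a b"
proof -
  have split: "poly_eval D c x = poly_eval K c x + (\<Sum>a\<in>{K..<D}. c a * x ^ a)" for c x
    using \<open>K \<le> D\<close> unfolding poly_eval_def lessThan_atLeast0
      by (simp add: sum.atLeastLessThan_concat)
  \<comment> \<open>Columns b >= K have nonzero entries only in rows < K and are interpolated first; by symmetry
    they supply the entries in rows >= K of the other columns.\<close>
  have low: "M1 a b = M2 a b"
    if "a < K" "b < D" and upper: "\<And>a. K \<le> a \<Longrightarrow> a < D \<Longrightarrow> M1 a b = M2 a b" for a b
  proof (rule poly_eval_coeffs_eq[OF X _ \<open>a < K\<close>])
    fix x assume "x \<in> X"
    have "(\<Sum>a\<in>{K..<D}. M1 a b * x ^ a) = (\<Sum>a\<in>{K..<D}. M2 a b * x ^ a)"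
      using upper by (intro sum.cong) auto
    then show "poly_eval K (\<lambda>a. M1 a b) x = poly_eval K (\<lambda>a. M2 a b) x"
      using rows[OF \<open>x \<in> X\<close> \<open>b < D\<close>] split by simp
  qed
  have high: "M1 a b = M2 a b" if "a < D" "K \<le> b" "b < D" for a b
  proof (cases "a < K")
    case True
    then show ?thesis by (rule low) (use that zero in auto)
  qed (use that zero in simp)
  have mixed: "M1 a b = M2 a b" if "K \<le> a" "a < D" "b < D" for a b
    using high[of b a] that by (simp add: sym(1)[of a b] sym(2)[of a b])
  show ?thesis
  proof (cases "K \<le> a")
    case False
    show ?thesis
    proof (cases "K \<le> b")
      case True
      then show ?thesis using high \<open>a < D\<close> \<open>b < D\<close> by blast
    next
      case False
      show ?thesis by (rule low) (use \<open>\<not> K \<le> a\<close> \<open>b < D\<close> mixed in auto)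
    qed
  qed (use mixed \<open>a < D\<close> \<open>b < D\<close> in simp)
qed

lemma finite_pm_files: "finite (pm_files K D Q)"
proof -
  have "pm_positions K D \<subseteq> {..<K} \<times> {..<D}" unfolding pm_positions_def by auto
  then have "finite (pm_positions K D)" by (rule finite_subset) simp
  then show ?thesis unfolding pm_files_def by (rule finite_PiE) simp
qed

lemma pm_files_nonempty: "1 \<le> Q \<Longrightarrow> pm_files K D Q \<noteq> {}"
  unfolding pm_files_def by (simp add: PiE_eq_empty_iff lessThan_empty_iff)

lemma pm_node_le:
  assumes "f \<in> pm_files K D Q" "x < N" "b < D"
  shows "pm_node D (pm_matrix K D f) x b \<le> D * Q * N ^ D"
  using poly_eval_le[OF assms(2), of D "\<lambda>a. pm_matrix K D f a b" Q]
      pm_matrix_le[OF assms(1)] assms(3)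
  by (simp add: pm_node_def)

lemma card_pm_node_le:
  assumes "x < N"
  shows "real (card ((\<lambda>f. pm_node D (pm_matrix K D f) x) ` pm_files K D Q))
      \<le> (real (D * Q * N ^ D) + 1) ^ D"
proof -
  have "(\<lambda>f. pm_node D (pm_matrix K D f) x) ` pm_files K D Q \<subseteq> PiE {..<D} (\<lambda>_. {..D * Q * N ^ D})"
  proof
    fix v assume "v \<in> (\<lambda>f. pm_node D (pm_matrix K D f) x) ` pm_files K D Q"
    then obtain f where "f \<in> pm_files K D Q" "v = pm_node D (pm_matrix K D f) x" by blast
    then show "v \<in> PiE {..<D} (\<lambda>_. {..D * Q * N ^ D})"
      using pm_node_le[OF _ assms] by (simp add: pm_node_def PiE_iff)
  qed
  from card_le_power_if_subset_PiE[OF this] show ?thesis by simp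
qed

lemma card_pm_message_le:
  assumes "i < N" "j < N"
  shows "real (card ((\<lambda>v. poly_eval D v i) ` (\<lambda>f. pm_node D (pm_matrix K D f) j) ` pm_files K D Q))
    \<le> real (D * (D * Q * N ^ D) * N ^ D) + 1"
proof -
  have "(\<lambda>v. poly_eval D v i) ` (\<lambda>f. pm_node D (pm_matrix K D f) j) ` pm_files K D Q
      \<subseteq> {..D * (D * Q * N ^ D) * N ^ D}"
  proof
    fix m assume "m \<in> (\<lambda>v. poly_eval D v i) ` (\<lambda>f. pm_node D (pm_matrix K D f) j) ` pm_files K D Q"
    then obtain f where "f \<in> pm_files K D Q" "m = poly_eval D (pm_node D (pm_matrix K D f) j) i"
      by blast
    then show "m \<in> {..D * (D * Q * N ^ D) * N ^ D}"
      using poly_eval_le[OF assms(1), of D _ "D * Q * N ^ D"] pm_node_le[OF _ assms(2)] by simp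
  qed
  then have "card ((\<lambda>v. poly_eval D v i) ` (\<lambda>f. pm_node D (pm_matrix K D f) j) ` pm_files K D Q)
      \<le> D * (D * Q * N ^ D) * N ^ D + 1"
    using card_mono[of "{..D * (D * Q * N ^ D) * N ^ D}"] by fastforce
  then show ?thesis by linarith
qed

lemma pm_reconstruct:
  assumes "K \<le> D" "finite R" "K \<le> card R" and f: "f1 \<in> pm_files K D Q" "f2 \<in> pm_files K D Q"
    and agree: "\<And>x. x \<in> R \<Longrightarrow> pm_node D (pm_matrix K D f1) x = pm_node D (pm_matrix K D f2) x"
  shows "f1 = f2"
proof (rule PiE_ext)
  show "f1 \<in> PiE (pm_positions K D) (\<lambda>_. {..<Q})" "f2 \<in> PiE (pm_positions K D) (\<lambda>_. {..<Q})"
    using f unfolding pm_files_def by auto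
  fix p assume p: "p \<in> pm_positions K D"
  then obtain a b where ab: "p = (a, b)" "a < D" "b < D" unfolding pm_positions_def by auto
  have "pm_matrix K D f1 a b = pm_matrix K D f2 a b"
  proof (rule sym_matrix_zero_block_eqI[OF pm_matrix_sym pm_matrix_sym pm_matrix_zero pm_matrix_zero
        assms(2,3,1) _ ab(2,3)])
    fix x c assume "x \<in> R" "c < D"
    then show "poly_eval D (\<lambda>a. pm_matrix K D f1 a c) x = poly_eval D (\<lambda>a. pm_matrix K D f2 a c) x"
      using fun_cong[OF agree[OF \<open>x \<in> R\<close>], of c] by (simp add: pm_node_def)
  qed
  then show "f1 p = f2 p" using p ab(1) by (simp add: pm_matrix_position)
qed

lemma pm_repair:
  assumes "finite H" "D \<le> card H"
    and agree: "\<And>j. j \<in> H \<Longrightarrow>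
      poly_eval D (pm_node D (pm_matrix K D f1) j) i
        = poly_eval D (pm_node D (pm_matrix K D f2) j) i"
  shows "pm_node D (pm_matrix K D f1) i = pm_node D (pm_matrix K D f2) i"
proof -
  have "pm_node D (pm_matrix K D f1) i b = pm_node D (pm_matrix K D f2) i b" if "b < D" for b
  proof (rule poly_eval_coeffs_eq[OF assms(1,2) _ that])
    fix j assume "j \<in> H"
    have "poly_eval D (pm_node D (pm_matrix K D f1) i) j
        = poly_eval D (pm_node D (pm_matrix K D f1) j) i"
      by (rule poly_eval_pm_node_swap) (rule pm_matrix_sym)
    also have "\<dots> = poly_eval D (pm_node D (pm_matrix K D f2) j) i" by (rule agree[OF \<open>j \<in> H\<close>])
    also have "\<dots> = poly_eval D (pm_node D (pm_matrix K D f2) i) j"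
      by (rule poly_eval_pm_node_swap) (rule pm_matrix_sym)
    finally show "poly_eval D (pm_node D (pm_matrix K D f1) i) j
          = poly_eval D (pm_node D (pm_matrix K D f2) i) j" .
  qed
  then show ?thesis unfolding pm_node_def by (intro restrict_ext) simp
qed

lemma pm_code:
  assumes "K \<le> D" "D < N" "1 \<le> Q"
  defines "c \<equiv> real ((D * N ^ D)\<^sup>2) + 1"
  shows "repair_code N K D ((c * real Q) ^ D) ((c * real Q) ^ 1) (pm_files K D Q)
    (\<lambda>x f. pm_node D (pm_matrix K D f) x) (\<lambda>i H j v. poly_eval D v i)"
proof
  define X where "X = D * N ^ D"
  have c: "c = real (X\<^sup>2) + 1" unfolding c_def X_def ..
  have sizes: "real (D * Q * N ^ D) = real Q * real X"
    "real (D * (D * Q * N ^ D) * N ^ D) = real Q * real (X\<^sup>2)"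
    by (simp_all add: X_def power2_eq_square mult_ac)
  have "real X \<le> real (X\<^sup>2)" by (simp only: of_nat_le_iff power2_eq_square le_square)
  then have "real Q * real X \<le> real Q * real (X\<^sup>2)" by (rule mult_left_mono) simp
  moreover have "1 \<le> real Q" using assms(3) by simp
  moreover have "c * real Q = real Q * real (X\<^sup>2) + real Q" unfolding c by (simp add: algebra_simps)
  ultimately have node_bound: "real (D * Q * N ^ D) + 1 \<le> c * real Q"
    and message_bound: "real (D * (D * Q * N ^ D) * N ^ D) + 1 \<le> c * real Q"
    unfolding sizes by linarith+
  show "finite (pm_files K D Q)" by (rule finite_pm_files)
  show "pm_files K D Q \<noteq> {}" using assms(3) by (rule pm_files_nonempty)
  show "real (card ((\<lambda>f. pm_node D (pm_matrix K D f) x) ` pm_files K D Q)) \<le> (c * real Q) ^ D"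
    if "x < N" for x
    by (rule order_trans[OF card_pm_node_le[OF that] power_mono[OF node_bound]]) simp
  show "f1 = f2" if "R \<subseteq> {..<N}" "card R = K" "f1 \<in> pm_files K D Q" "f2 \<in> pm_files K D Q"
    "\<And>x. x \<in> R \<Longrightarrow> pm_node D (pm_matrix K D f1) x = pm_node D (pm_matrix K D f2) x" for R f1 f2
  proof (rule pm_reconstruct[OF assms(1) _ _ that(3-5)])
    show "finite R" using that(1) by (rule finite_subset) simp
  qed (use that(2) in simp)
  show "real (card ((\<lambda>v. poly_eval D v i) ` (\<lambda>f. pm_node D (pm_matrix K D f) j) ` pm_files K D Q))
      \<le> (c * real Q) ^ 1" if "i < N" "H \<subseteq> {..<N} - {i}" "card H = D" "j \<in> H" for i H j
  proof -
    have "j < N" using that(2,4) by auto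
    then show ?thesis using order_trans[OF card_pm_message_le[OF that(1) \<open>j < N\<close>] message_bound]
      by simp
  qed
  show "pm_node D (pm_matrix K D f1) i = pm_node D (pm_matrix K D f2) i"
    if "i < N" "H \<subseteq> {..<N} - {i}" "card H = D" "f1 \<in> pm_files K D Q" "f2 \<in> pm_files K D Q"
      "\<And>j. j \<in> H \<Longrightarrow> poly_eval D (pm_node D (pm_matrix K D f1) j) i
        = poly_eval D (pm_node D (pm_matrix K D f2) j) i"
    for i H f1 f2
  proof (rule pm_repair[OF _ _ that(6)])
    show "finite H" using that(2) by (rule finite_subset) simp
  qed (use that(3) in simp)
qed

lemma C_exact_MBR:
  assumes "0 < K" "K \<le> D" "D < N" "0 < \<alpha>"
  shows "C_exact N K D \<alpha> \<alpha> = C_func K D \<alpha> \<alpha>"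
proof (rule antisym)
  show "C_exact N K D \<alpha> \<alpha> \<le> C_func K D \<alpha> \<alpha>" using assms by (intro C_exact_le_C_func) auto
  define L where "L = (\<Sum>a<K. D - a)"
  have "real L * min (\<alpha> / real D) (\<alpha> / (real D * real (1::nat))) \<le> C_exact N K D \<alpha> \<alpha>"
  proof (rule C_exact_ge_code_family[where c = "real ((D * N ^ D)\<^sup>2) + 1" and Fs = "pm_files K D"
        and \<phi>s = "\<lambda>Q x f. pm_node D (pm_matrix K D f) x" and \<mu>s = "\<lambda>Q i H j v. poly_eval D v i"])
    fix Q :: nat assume "2 \<le> Q"
    then show "repair_code N K D (((real ((D * N ^ D)\<^sup>2) + 1) * real Q) ^ D)
        (((real ((D * N ^ D)\<^sup>2) + 1) * real Q) ^ 1) (pm_files K D Q)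
        (\<lambda>x f. pm_node D (pm_matrix K D f) x) (\<lambda>i H j v. poly_eval D v i)"
      using assms by (intro pm_code) auto
    show "card (pm_files K D Q) = Q ^ L" unfolding L_def using assms(2) by (rule card_pm_files)
  qed (use assms in auto)
  moreover have "C_func K D \<alpha> \<alpha> = real L * \<alpha> / real D"
  proof -
    have "(real D - real j) / real D * \<alpha> \<le> \<alpha>" if "j < K" for j
      using assms that by (intro mult_left_le_one_le) auto
    then have "C_func K D \<alpha> \<alpha> = (\<Sum>j<K. (real D - real j) / real D * \<alpha>)"
      unfolding C_func_def by (intro sum.cong refl min.absorb2) auto
    also have "\<dots> = (\<Sum>j<K. (real D - real j) * \<alpha> / real D)" by simp
    also have "\<dots> = real L * \<alpha> / real D"
      unfolding L_def using assms by (simp add: of_nat_diff sum_divide_distrib sum_distrib_right)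
    finally show ?thesis .
  qed
  ultimately show "C_func K D \<alpha> \<alpha> \<le> C_exact N K D \<alpha> \<alpha>" by simp
qed

section \<open>Canonical layered codes\<close>

lemma card_subsets_containing:
  assumes "finite A" "T \<subseteq> A" "card T \<le> w"
  shows "card {S. S \<subseteq> A \<and> card S = w \<and> T \<subseteq> S} = (card A - card T) choose (w - card T)"
proof -
  have fin_T: "finite T" using assms(1,2) by (rule finite_subset[rotated])
  have "{S. S \<subseteq> A \<and> card S = w \<and> T \<subseteq> S} = (\<lambda>U. U \<union> T) ` {U. U \<subseteq> A - T \<and> card U = w - card T}"
  proof (intro equalityI subsetI)
    fix S assume S: "S \<in> {S. S \<subseteq> A \<and> card S = w \<and> T \<subseteq> S}"
    then have "finite S" using assms(1) finite_subset by blast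
    then have "card (S - T) = w - card T" using S by (simp add: card_Diff_subset fin_T)
    moreover have "S = (S - T) \<union> T" using S by blast
    ultimately show "S \<in> (\<lambda>U. U \<union> T) ` {U. U \<subseteq> A - T \<and> card U = w - card T}"
      using S by blast
  next
    fix S assume "S \<in> (\<lambda>U. U \<union> T) ` {U. U \<subseteq> A - T \<and> card U = w - card T}"
    then obtain U where U: "U \<subseteq> A - T" "card U = w - card T" "S = U \<union> T" by blast
    have "finite U" using U(1) assms(1) finite_subset by blast
    then have "card S = w" using U assms(3) fin_T by (subst U(3), subst card_Un_disjoint) auto
    then show "S \<in> {S. S \<subseteq> A \<and> card S = w \<and> T \<subseteq> S}" using U assms(2) by blast
  qed
  moreover have "inj_on (\<lambda>U. U \<union> T) {U. U \<subseteq> A - T \<and> card U = w - card T}"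
    by (rule inj_onI) blast
  moreover have "card (A - T) = card A - card T" using assms(2) fin_T
    by (rule card_Diff_subset[rotated])
  ultimately show ?thesis using assms(1) by (simp add: card_image n_subsets)
qed

lemma card_Int_ge:
  assumes "A \<subseteq> U" "B \<subseteq> U" "finite U"
  shows "card A + card B \<le> card U + card (A \<inter> B)"
proof -
  have "finite A" "finite B" using assms finite_subset by auto
  then have "card A + card B = card (A \<union> B) + card (A \<inter> B)" by (rule card_Un_Int)
  moreover have "card (A \<union> B) \<le> card U" using assms by (intro card_mono) auto
  ultimately show ?thesis by linarith
qed

(* Every w-subset S of the nodes carries its own polynomial f S of degree < w - (N - K), evaluated
   at the nodes of S. Node i stores the values of the layers containing i, and helper j sends it the
   values of the layers containing both. *)
definition layers :: "nat \<Rightarrow> nat \<Rightarrow> nat set set" where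
  "layers N w = {S. S \<subseteq> {..<N} \<and> card S = w}"

definition layered_files :: "nat \<Rightarrow> nat \<Rightarrow> nat \<Rightarrow> nat \<Rightarrow> (nat set \<Rightarrow> nat \<Rightarrow> nat) set" where
  "layered_files N w L Q = PiE (layers N w) (\<lambda>S. PiE {..<L} (\<lambda>_. {..<Q}))"

definition layered_node :: "nat \<Rightarrow> nat \<Rightarrow> nat \<Rightarrow> nat \<Rightarrow> (nat set \<Rightarrow> nat \<Rightarrow> nat) \<Rightarrow> nat set \<Rightarrow> nat" where
  "layered_node N w L x f = (\<lambda>S\<in>{S \<in> layers N w. x \<in> S}. poly_eval L (f S) x)"

definition layered_message :: "nat \<Rightarrow> nat \<Rightarrow> nat \<Rightarrow> nat \<Rightarrow> (nat set \<Rightarrow> nat) \<Rightarrow> nat set \<Rightarrow> nat" where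
  "layered_message N w i j v = restrict v {S \<in> layers N w. i \<in> S \<and> j \<in> S}"

lemma finite_layers: "finite (layers N w)"
  unfolding layers_def by (rule finite_subset[of _ "Pow {..<N}"]) auto

lemma finite_layered_files: "finite (layered_files N w L Q)"
  unfolding layered_files_def by (intro finite_PiE finite_layers) auto

lemma layered_files_nonempty: "1 \<le> Q \<Longrightarrow> layered_files N w L Q \<noteq> {}"
  unfolding layered_files_def by (simp add: PiE_eq_empty_iff lessThan_empty_iff)

lemma card_layered_files: "card (layered_files N w L Q) = Q ^ (L * (N choose w))"
proof -
  have "card (layers N w) = N choose w" unfolding layers_def using n_subsets[of "{..<N}" w] by simp
  then show ?thesis unfolding layered_files_def
    by (simp add: card_PiE finite_layers power_mult)
qed

lemma card_layers_containing:
  assumes "T \<subseteq> {..<N}" "card T \<le> w"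
  shows "card {S \<in> layers N w. T \<subseteq> S} = (N - card T) choose (w - card T)"
  using card_subsets_containing[OF finite_lessThan assms] unfolding layers_def by simp

lemma layered_node_le:
  assumes "f \<in> layered_files N w L Q" "S \<in> layers N w" "x < N"
  shows "poly_eval L (f S) x \<le> L * Q * N ^ L"
proof (rule poly_eval_le[OF assms(3)])
  fix l assume "l < L"
  then show "f S l \<le> Q" using assms(1,2) unfolding layered_files_def
    by (auto simp: PiE_iff less_imp_le)
qed

lemma layered_message_node:
  "layered_message N w i j (layered_node N w L j f) =
    restrict (\<lambda>S. poly_eval L (f S) j) {S \<in> layers N w. i \<in> S \<and> j \<in> S}"
  unfolding layered_message_def layered_node_def by (rule restrict_ext) simp

lemma card_layered_node_le:
  assumes "x < N" "1 \<le> w"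
  shows "real (card (layered_node N w L x ` layered_files N w L Q))
    \<le> (real (L * Q * N ^ L) + 1) ^ ((N - 1) choose (w - 1))"
proof -
  have incl: "layered_node N w L x ` layered_files N w L Q
      \<subseteq> PiE {S \<in> layers N w. x \<in> S} (\<lambda>_. {..L * Q * N ^ L})"
  proof (rule image_subsetI)
    fix f assume "f \<in> layered_files N w L Q"
    then show "layered_node N w L x f \<in> PiE {S \<in> layers N w. x \<in> S} (\<lambda>_. {..L * Q * N ^ L})"
      unfolding layered_node_def using layered_node_le[OF _ _ assms(1)]
        by (simp add: restrict_PiE_iff)
  qed
  have fin: "finite {S \<in> layers N w. x \<in> S}" by (rule finite_subset[OF _ finite_layers]) auto
  have "card {S \<in> layers N w. x \<in> S} = (N - 1) choose (w - 1)"
    using card_layers_containing[of "{x}" N w] assms by simp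
  with card_le_power_if_subset_PiE[OF incl fin] show ?thesis by simp
qed

lemma card_layered_message_le:
  assumes "i < N" "j < N" "i \<noteq> j" "2 \<le> w"
  shows "real (card (layered_message N w i j ` layered_node N w L j ` layered_files N w L Q))
    \<le> (real (L * Q * N ^ L) + 1) ^ ((N - 2) choose (w - 2))"
proof -
  have incl: "layered_message N w i j ` layered_node N w L j ` layered_files N w L Q
      \<subseteq> PiE {S \<in> layers N w. i \<in> S \<and> j \<in> S} (\<lambda>_. {..L * Q * N ^ L})"
  proof (rule image_subsetI)
    fix v assume "v \<in> layered_node N w L j ` layered_files N w L Q"
    then obtain f where "f \<in> layered_files N w L Q" "v = layered_node N w L j f" by blast
    then show "layered_message N w i j v \<in> PiE {S \<in> layers N w. i \<in> S \<and> j \<in> S}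
          (\<lambda>_. {..L * Q * N ^ L})"
      using layered_node_le[OF _ _ assms(2)] by (simp add: layered_message_node restrict_PiE_iff)
  qed
  have fin: "finite {S \<in> layers N w. i \<in> S \<and> j \<in> S}"
    by (rule finite_subset[OF _ finite_layers]) auto
  have "card {S \<in> layers N w. i \<in> S \<and> j \<in> S} = (N - 2) choose (w - 2)"
    using card_layers_containing[of "{i, j}" N w] assms by (simp add: numeral_2_eq_2)
  with card_le_power_if_subset_PiE[OF incl fin] show ?thesis by simp
qed

lemma layered_files_eqI:
  assumes f: "f1 \<in> layered_files N w L Q" "f2 \<in> layered_files N w L Q" and "S \<in> layers N w"
    and X: "finite X" "L \<le> card X" "\<And>x. x \<in> X \<Longrightarrow> poly_eval L (f1 S) x = poly_eval L (f2 S) x"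
  shows "f1 S = f2 S"
proof (rule PiE_ext)
  show "f1 S \<in> PiE {..<L} (\<lambda>_. {..<Q})" "f2 S \<in> PiE {..<L} (\<lambda>_. {..<Q})"
    using f \<open>S \<in> layers N w\<close> unfolding layered_files_def by auto
  show "f1 S l = f2 S l" if "l \<in> {..<L}" for l
    using poly_eval_coeffs_eq[OF X] that by simp
qed

lemma layered_reconstruct:
  assumes "w \<le> N" "R \<subseteq> {..<N}" "card R = K"
    and f: "f1 \<in> layered_files N w (w - (N - K)) Q" "f2 \<in> layered_files N w (w - (N - K)) Q"
    and agree: "\<And>x. x \<in> R \<Longrightarrow>
      layered_node N w (w - (N - K)) x f1 = layered_node N w (w - (N - K)) x f2"
  shows "f1 = f2"
proof (rule PiE_ext)
  show "f1 \<in> PiE (layers N w) (\<lambda>S. PiE {..<w - (N - K)} (\<lambda>_. {..<Q}))"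
    "f2 \<in> PiE (layers N w) (\<lambda>S. PiE {..<w - (N - K)} (\<lambda>_. {..<Q}))"
    using f unfolding layered_files_def by auto
  fix S assume S: "S \<in> layers N w"
  show "f1 S = f2 S"
  proof (rule layered_files_eqI[OF f S])
    show "finite (S \<inter> R)" using assms(2) finite_subset by blast
    have "card S + card R \<le> card {..<N} + card (S \<inter> R)"
      using S assms(2) by (intro card_Int_ge) (auto simp: layers_def)
    then show "w - (N - K) \<le> card (S \<inter> R)" using S assms(3) by (simp add: layers_def)
    fix x assume "x \<in> S \<inter> R"
    then show "poly_eval (w - (N - K)) (f1 S) x = poly_eval (w - (N - K)) (f2 S) x"
      using fun_cong[OF agree, of x S] S by (simp add: layered_node_def)
  qed
qed

lemma layered_repair:
  assumes "K \<le> D" "i < N" "H \<subseteq> {..<N} - {i}" "card H = D"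
    and f: "f1 \<in> layered_files N w (w - (N - K)) Q" "f2 \<in> layered_files N w (w - (N - K)) Q"
    and agree: "\<And>j. j \<in> H \<Longrightarrow>
      layered_message N w i j (layered_node N w (w - (N - K)) j f1) =
      layered_message N w i j (layered_node N w (w - (N - K)) j f2)"
  shows "layered_node N w (w - (N - K)) i f1 = layered_node N w (w - (N - K)) i f2"
  unfolding layered_node_def
proof (rule restrict_ext)
  fix S assume S: "S \<in> {S \<in> layers N w. i \<in> S}"
  have "f1 S = f2 S"
  proof (rule layered_files_eqI[OF f])
    show "S \<in> layers N w" using S by simp
    have "finite H" using assms(3) by (rule finite_subset) simp
    then show "finite (S \<inter> H)" by simp
    have "card (S - {i}) + card H \<le> card ({..<N} - {i}) + card ((S - {i}) \<inter> H)"
      using S assms(3) by (intro card_Int_ge) (auto simp: layers_def)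
    moreover have "(S - {i}) \<inter> H = S \<inter> H" using assms(3) by auto
    ultimately show "w - (N - K) \<le> card (S \<inter> H)"
      using S assms(1,2,4) by (simp add: layers_def)
    fix x assume "x \<in> S \<inter> H"
    then show "poly_eval (w - (N - K)) (f1 S) x = poly_eval (w - (N - K)) (f2 S) x"
      using fun_cong[OF agree, of x S] S by (simp add: layered_node_def layered_message_def)
  qed
  then show "poly_eval (w - (N - K)) (f1 S) i = poly_eval (w - (N - K)) (f2 S) i" by simp
qed

lemma layered_code:
  assumes "K \<le> D" "D < N" "N - K < w" "w \<le> N" "1 \<le> Q"
  defines "L \<equiv> w - (N - K)"
  defines "c \<equiv> real (L * N ^ L) + 1"
  shows "repair_code N K D ((c * real Q) ^ ((N - 1) choose (w - 1)))
      ((c * real Q) ^ ((N - 2) choose (w - 2)))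
    (layered_files N w L Q) (layered_node N w L) (\<lambda>i H. layered_message N w i)"
proof
  have "real (L * Q * N ^ L) + 1 \<le> c * real Q"
    using assms(5) unfolding c_def by (simp add: algebra_simps)
  then have bound: "(real (L * Q * N ^ L) + 1) ^ e \<le> (c * real Q) ^ e" for e
    by (rule power_mono) simp
  show "finite (layered_files N w L Q)" by (rule finite_layered_files)
  show "layered_files N w L Q \<noteq> {}" using assms(5) by (rule layered_files_nonempty)
  show "real (card (layered_node N w L x ` layered_files N w L Q))
      \<le> (c * real Q) ^ ((N - 1) choose (w - 1))"
    if "x < N" for x
    using assms(3) by (intro order_trans[OF card_layered_node_le[OF that] bound]) simp
  show "real (card (layered_message N w i j ` layered_node N w L j ` layered_files N w L Q))
      \<le> (c * real Q) ^ ((N - 2) choose (w - 2))"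
    if "i < N" "H \<subseteq> {..<N} - {i}" "card H = D" "j \<in> H" for i H j
    using that assms(1-3) by (intro order_trans[OF card_layered_message_le bound]) auto
  show "f1 = f2" if "R \<subseteq> {..<N}" "card R = K"
      "f1 \<in> layered_files N w L Q" "f2 \<in> layered_files N w L Q"
    "\<And>x. x \<in> R \<Longrightarrow> layered_node N w L x f1 = layered_node N w L x f2" for R f1 f2
    using layered_reconstruct[OF assms(4) that[unfolded L_def]] .
  show "layered_node N w L i f1 = layered_node N w L i f2"
    if "i < N" "H \<subseteq> {..<N} - {i}" "card H = D"
        "f1 \<in> layered_files N w L Q" "f2 \<in> layered_files N w L Q"
      "\<And>j. j \<in> H \<Longrightarrow> layered_message N w i j (layered_node N w L j f1) =
        layered_message N w i j (layered_node N w L j f2)" for i H f1 f2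
    using layered_repair[OF assms(1) that[unfolded L_def]] unfolding L_def .
qed

lemma real_binomial_eq: "0 < w \<Longrightarrow>
  real (N choose w) = real N * real ((N - 1) choose (w - 1)) / real w"
  using times_binomial_minus1_eq[of w N] by (simp add: field_simps flip: of_nat_mult)

lemma C_exact_layered_code_ge:
  assumes "K \<le> D" "D < N" "N - K < w" "w \<le> N" "0 < \<alpha>" "0 < \<gamma>"
  shows "real ((w - (N - K)) * (N choose w)) *
      min (\<alpha> / real ((N - 1) choose (w - 1))) (\<gamma> / (real D * real ((N - 2) choose (w - 2))))
    \<le> C_exact N K D \<alpha> \<gamma>"
proof (rule C_exact_ge_code_family[where c = "real ((w - (N - K)) * N ^ (w - (N - K))) + 1"
      and Fs = "layered_files N w (w - (N - K))" and \<phi>s = "\<lambda>Q. layered_node N w (w - (N - K))"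
      and \<mu>s = "\<lambda>Q i H. layered_message N w i"])
  fix Q :: nat assume "2 \<le> Q"
  then show "repair_code N K D
      (((real ((w - (N - K)) * N ^ (w - (N - K))) + 1) * real Q) ^ ((N - 1) choose (w - 1)))
      (((real ((w - (N - K)) * N ^ (w - (N - K))) + 1) * real Q) ^ ((N - 2) choose (w - 2)))
      (layered_files N w (w - (N - K)) Q) (layered_node N w (w - (N - K)))
        (\<lambda>i H. layered_message N w i)"
    using assms by (intro layered_code) auto
  show "card (layered_files N w (w - (N - K)) Q) = Q ^ ((w - (N - K)) * (N choose w))"
    by (rule card_layered_files)
qed (use assms in auto)

lemma C_exact_layered_ge:
  assumes "K \<le> D" "D < N" "N - K < w" "w \<le> N" "0 < \<alpha>" "0 < \<gamma>"
  shows "real (w - (N - K)) * real N / real w * min \<alpha> (\<gamma> * (real N - 1) / (real D * (real w - 1)))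
    \<le> C_exact N K D \<alpha> \<gamma>"
proof -
  define L au bu where "L = w - (N - K)" and "au = (N - 1) choose (w - 1)"
    and "bu = (N - 2) choose (w - 2)"
  define x y where "x = real w - 1" and "y = real N - 1"
  have "2 \<le> w" using assms by linarith
  then have nonzero: "real D \<noteq> 0" "real w \<noteq> 0" "x \<noteq> 0" "y \<noteq> 0" "real au \<noteq> 0"
    using assms by (auto simp: x_def y_def au_def)
  have Cw: "real (N choose w) = real N * real au / real w"
    unfolding au_def using \<open>2 \<le> w\<close> by (intro real_binomial_eq) simp
  have "real au = real (N - 1) * real bu / real (w - 1)"
    unfolding au_def bu_def using real_binomial_eq[of "w - 1" "N - 1"] \<open>2 \<le> w\<close>
    by (simp add: numeral_2_eq_2)
  then have bu: "real bu = x * real au / y"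
    using \<open>2 \<le> w\<close> assms(4) nonzero by (simp add: x_def y_def of_nat_diff field_simps)
  have "real (L * (N choose w)) * (\<alpha> / real au) = real L * real N / real w * \<alpha>"
    "real (L * (N choose w)) * (\<gamma> / (real D * real bu))
        = real L * real N / real w * (\<gamma> * y / (real D * x))"
    unfolding of_nat_mult Cw bu using nonzero by (simp_all add: field_simps)
  moreover have "0 \<le> real L * real N / real w" by simp
  ultimately have "real (L * (N choose w)) * min (\<alpha> / real au) (\<gamma> / (real D * real bu))
      = real L * real N / real w * min \<alpha> (\<gamma> * y / (real D * x))"
    by (simp only: min_mult_distrib_left if_P[OF of_nat_0_le_iff] if_P)
  then show ?thesis
    using C_exact_layered_code_ge[OF assms] unfolding L_def au_def bu_def x_def y_def by simp
qed

section \<open>The capacity ratio\<close>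

lemma C_func_pos:
  assumes "0 < K" "K \<le> D" "0 < \<alpha>" "0 < \<gamma>"
  shows "0 < C_func K D \<alpha> \<gamma>"
proof -
  have "0 < min \<alpha> ((real D - real 0) / real D * \<gamma>)" using assms by simp
  also have "\<dots> \<le> C_func K D \<alpha> \<gamma>"
    unfolding C_func_def using assms by (intro member_le_sum) auto
  finally show ?thesis .
qed

lemma C_func_le: "C_func K D \<alpha> \<gamma> \<le> real K * \<alpha>"
proof -
  have "C_func K D \<alpha> \<gamma> \<le> (\<Sum>j<K. \<alpha>)" unfolding C_func_def by (intro sum_mono) simp
  then show ?thesis by simp
qed

lemma C_exact_div_C_func_le_one:
  assumes "0 < K" "K \<le> D" "D < N" "0 < \<alpha>" "0 < \<gamma>"
  shows "C_exact N K D \<alpha> \<gamma> / C_func K D \<alpha> \<gamma> \<le> 1"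
  using C_exact_le_C_func[of K D N \<alpha> \<gamma>] C_func_pos[OF assms(1,2,4,5)] assms by simp

lemma alpha_le_interpolated_bandwidth:
  assumes "0 < K" "K \<le> D" "0 \<le> \<alpha>" "0 \<le> s"
  shows "\<alpha> \<le> s * (real D * \<alpha> / (real D - real K + 1)) + (1 - s) * \<alpha>"
proof -
  have "\<alpha> * (real D - real K + 1) \<le> \<alpha> * real D" using assms by (intro mult_left_mono) auto
  then have "\<alpha> \<le> real D * \<alpha> / (real D - real K + 1)" using assms
    by (simp add: le_divide_eq mult.commute)
  then have "s * \<alpha> \<le> s * (real D * \<alpha> / (real D - real K + 1))" using assms(4)
    by (rule mult_left_mono)
  then show ?thesis by (simp add: algebra_simps)
qed

lemma C_exact_div_C_func_ge_layered:
  assumes "0 < K" "K \<le> D" "D < N" "0 < \<alpha>" "N - K < w" "w \<le> N"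
    and \<gamma>: "real D * \<alpha> * (real w - 1) \<le> \<gamma> * (real N - 1)"
  shows "1 - real (N - K) / real w \<le> C_exact N K D \<alpha> \<gamma> / C_func K D \<alpha> \<gamma>"
proof -
  have "2 \<le> w" "2 \<le> N" using assms by linarith+
  then have "0 < real D * \<alpha> * (real w - 1)" using assms by simp
  then have "0 < \<gamma> * (real N - 1)" using \<gamma> by linarith
  then have "0 < \<gamma>" using \<open>2 \<le> N\<close> by (simp add: zero_less_mult_iff)
  have C_func: "0 < C_func K D \<alpha> \<gamma>" using assms \<open>0 < \<gamma>\<close> by (intro C_func_pos) auto
  have "real K * \<alpha> \<le> real N * \<alpha>" using assms by (intro mult_right_mono) auto
  then have C_func_N: "C_func K D \<alpha> \<gamma> \<le> real N * \<alpha>" using C_func_le[of K D \<alpha> \<gamma>] by linarith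
  have "\<alpha> \<le> \<gamma> * (real N - 1) / (real D * (real w - 1))"
    using \<gamma> assms \<open>2 \<le> w\<close> by (simp add: le_divide_eq mult_ac)
  then have "real (w - (N - K)) * real N / real w * \<alpha> \<le> C_exact N K D \<alpha> \<gamma>"
    using C_exact_layered_ge[OF assms(2,3,5,6,4) \<open>0 < \<gamma>\<close>] by (simp add: min_absorb1)
  moreover have "1 - real (N - K) / real w
      = real (w - (N - K)) * real N / real w * \<alpha> / (real N * \<alpha>)"
    using assms \<open>2 \<le> w\<close> by (simp add: of_nat_diff field_simps)
  moreover have "\<dots> \<le> real (w - (N - K)) * real N / real w * \<alpha> / C_func K D \<alpha> \<gamma>"
    using C_func C_func_N assms by (intro divide_left_mono) auto
  ultimately show ?thesis using C_func by (smt (verit) divide_right_mono)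
qed

lemma C_exact_div_C_func_ge:
  assumes "0 < K" "K \<le> D" "D < N" "0 < \<alpha>" "0 < s" "s \<le> 1"
    and \<gamma>: "\<gamma> = s * (real D * \<alpha> / (real D - real K + 1)) + (1 - s) * \<alpha>"
  shows "1 - real (N - K) * (real D - real K + 1) / (s * (real N - 1))
    \<le> C_exact N K D \<alpha> \<gamma> / C_func K D \<alpha> \<gamma>"
proof -
  define r where "r = real D - real K + 1"
  define x where "x = s * (real N - 1) / r"
  \<comment> \<open>The layered code with layer size w has bandwidth at most \<gamma> since w - 1 \<le> x.\<close>
  define w where "w = nat \<lfloor>x\<rfloor> + 1"
  have "1 \<le> r" "2 \<le> N" using assms by (simp_all add: r_def)
  have "0 < x" using assms \<open>1 \<le> r\<close> \<open>2 \<le> N\<close> by (simp add: x_def)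
  then have w: "real w - 1 \<le> x" "x < real w" by (simp_all add: w_def) linarith+
  have "0 < \<gamma>"
    using alpha_le_interpolated_bandwidth[of K D \<alpha> s] assms unfolding \<gamma> by linarith
  then have C_func: "0 < C_func K D \<alpha> \<gamma>" using assms by (intro C_func_pos) auto
  show ?thesis
  proof (cases "N - K < w")
    case True
    have "x \<le> real N - 1"
      using assms \<open>1 \<le> r\<close> \<open>2 \<le> N\<close> unfolding x_def
      by (simp add: divide_le_eq mult_le_one mult_left_le)
    then have "w \<le> N" using w by linarith
    have "real D * \<alpha> * (real w - 1) \<le> real D * \<alpha> * x"
      using w assms by (intro mult_left_mono) auto
    also have "\<dots> = s * (real D * \<alpha> / r) * (real N - 1)"
      using \<open>1 \<le> r\<close> by (simp add: x_def field_simps)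
    also have "\<dots> \<le> \<gamma> * (real N - 1)"
      using assms \<open>2 \<le> N\<close> unfolding \<gamma> r_def[symmetric] by (intro mult_right_mono) auto
    finally have "1 - real (N - K) / real w \<le> C_exact N K D \<alpha> \<gamma> / C_func K D \<alpha> \<gamma>"
      using C_exact_div_C_func_ge_layered[OF assms(1-4) True \<open>w \<le> N\<close>] by blast
    moreover have "real (N - K) / real w \<le> real (N - K) / x"
      using w \<open>0 < x\<close> by (intro divide_left_mono) auto
    ultimately show ?thesis unfolding x_def r_def by simp
  next
    case False
    then have "x < real (N - K)" using w by linarith
    then have "1 < real (N - K) * r / (s * (real N - 1))"
      using assms \<open>1 \<le> r\<close> \<open>2 \<le> N\<close> unfolding x_def by (simp add: field_simps)
    moreover have "0 \<le> C_exact N K D \<alpha> \<gamma>"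
      using assms \<open>0 < \<gamma>\<close> by (intro C_exact_nonneg) auto
    ultimately show ?thesis using C_func unfolding r_def by (smt (verit) divide_nonneg_pos)
  qed
qed

theorem theorem5p2:
  fixes n k d :: nat and \<alpha> s :: real
  assumes "0 < k" "k \<le> d" "d < n" "0 < \<alpha>" "0 \<le> s" "s \<le> 1"
  shows "(\<lambda>M. let \<gamma>MSR = real (d + M) * \<alpha> / (real (d + M) - real (k + M) + 1);
                 \<gamma>MBR = \<alpha>;
                 \<gamma> = s * \<gamma>MSR + (1 - s) * \<gamma>MBR
             in C_exact (n + M) (k + M) (d + M) \<alpha> \<gamma> / C_func (k + M) (d + M) \<alpha> \<gamma>)
         \<longlonglongrightarrow> 1"
proof -
  define \<gamma> where "\<gamma> = (\<lambda>M. s * (real (d + M) * \<alpha> / (real (d + M) - real (k + M) + 1))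
      + (1 - s) * \<alpha>)"
  define ratio where
    "ratio = (\<lambda>M. C_exact (n + M) (k + M) (d + M) \<alpha> (\<gamma> M) / C_func (k + M) (d + M) \<alpha> (\<gamma> M))"
  have KM: "0 < k + M" "k + M \<le> d + M" "d + M < n + M" for M using assms by auto
  have "ratio \<longlonglongrightarrow> 1"
  proof (cases "s = 0")
    case True
    then have "ratio = (\<lambda>M. 1)"
      using C_exact_MBR[OF KM assms(4)]
          C_func_pos[OF KM(1,2) assms(4,4), THEN less_imp_neq, THEN not_sym]
      by (simp add: ratio_def \<gamma>_def)
    then show ?thesis by simp
  next
    case False
    with assms(5) have "0 < s" by simp
    have "0 \<le> \<alpha>" using assms(4) by simp
    have \<gamma>_pos: "0 < \<gamma> M" for M
      using alpha_le_interpolated_bandwidth[OF KM(1,2)[of M] \<open>0 \<le> \<alpha>\<close> assms(5)] assms(4)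
      unfolding \<gamma>_def by linarith
    have upper: "ratio M \<le> 1" for M
      unfolding ratio_def using KM assms(4) \<gamma>_pos by (rule C_exact_div_C_func_le_one)
    have lower: "1 - real (n - k) * (real d - real k + 1) / (s * (real (n + M) - 1))
        \<le> ratio M" for M
      using C_exact_div_C_func_ge[OF KM assms(4) \<open>0 < s\<close> assms(6) refl]
        by (simp add: ratio_def \<gamma>_def)
    have "(\<lambda>M. 1 - real (n - k) * (real d - real k + 1) / (s * (real (n + M) - 1))) \<longlonglongrightarrow> 1"
      using \<open>0 < s\<close> by real_asymp
    then show ?thesis
      by (rule tendsto_sandwich[OF always_eventually always_eventually _ tendsto_const, rotated 2])
        (intro allI lower upper)+
  qed
  then show ?thesis unfolding Let_def ratio_def \<gamma>_def .
qed

end
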